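(* Let $r\ge2$ be an integer, let $f\in C_p(\mathbb{R})$ and let $c>0$. Then $f\in\mathcal{P}_c$ if and only if the following holds: for all $n\in\mathbb{N}_0$, $k\in\mathbb{Z}$, $y\in(0,1)$ and all $t\ge \frac{1}{2cr^n}$, $$q_f\Big(t,x;\tfrac{k+y}{r^n}\Big)\ge \min\Big\{q_f\Big(t,x;\tfrac{k}{r^n}\Big),\,q_f\Big(t,x;\tfrac{k+1}{r^n}\Big)\Big\}\quad\text{for all }x\in\mathbb{R}.$$
   Context: $C_p(\mathbb{R})$ denotes the set of all continuous functions $f:\mathbb{R}\to\mathbb{R}$ periodic with period $1$ with $f(0)=0$; $\mathbb{N}_0=\mathbb{N}\cup\{0\}$. For $f\in C_p(\mathbb{R})$, $q_f(t,x;z)=f(z)+\frac{1}{2t}(x-z)^2$ for $(t,x,z)\in(0,\infty)\times\mathbb{R}\times\mathbb{R}$. For $(n,k,y)\in\mathbb{N}_0\times\mathbb{Z}\times(0,1)$ let $\delta^+_{n,k}(y;f)=\dfrac{f(\frac{k+1}{r^n})-f(\frac{k+y}{r^n})}{\frac{1-y}{r^n}}$, $\delta^-_{n,k}(y;f)=\dfrac{f(\frac{k+y}{r^n})-f(\frac{k}{r^n})}{\frac{y}{r^n}}$. For $c>0$, $\mathcal{P}_c$ is the set of $f\in C_p(\mathbb{R})$ with $\delta^+_{n,k}(y;f)-\delta^-_{n,k}(y;f)\le -c$ for all $(n,k,y)\in\mathbb{N}_0\times\mathbb{Z}\times(0,1)$. *)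

theory Defs
  imports "HOL-Analysis.Analysis"
begin

definition Cp :: "(real \<Rightarrow> real) set" where
  "Cp = {f. continuous_on UNIV f \<and> (\<forall>x. f (x + 1) = f x) \<and> f 0 = 0}"

definition qf :: "(real \<Rightarrow> real) \<Rightarrow> real \<Rightarrow> real \<Rightarrow> real \<Rightarrow> real" where
  "qf f t x z = f z + (x - z)^2 / (2 * t)"

definition delta_plus :: "nat \<Rightarrow> nat \<Rightarrow> int \<Rightarrow> real \<Rightarrow> (real \<Rightarrow> real) \<Rightarrow> real" where
  "delta_plus r n k y f =
     (f ((k + 1) / real r ^ n) - f ((k + y) / real r ^ n)) / ((1 - y) / real r ^ n)"

definition delta_minus :: "nat \<Rightarrow> nat \<Rightarrow> int \<Rightarrow> real \<Rightarrow> (real \<Rightarrow> real) \<Rightarrow> real" where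
  "delta_minus r n k y f =
     (f ((k + y) / real r ^ n) - f (k / real r ^ n)) / (y / real r ^ n)"

definition Pc :: "nat \<Rightarrow> real \<Rightarrow> (real \<Rightarrow> real) set" where
  "Pc r c = {f \<in> Cp. \<forall>n k y. 0 < y \<and> y < 1 \<longrightarrow>
                 delta_plus r n k y f - delta_minus r n k y f \<le> - c}"

end

theory Submission
  imports Defs
begin

text \<open>Put \<open>h = r\<^sup>-\<^sup>n\<close>, \<open>a = k h\<close> and let \<open>E\<close> be the excess of \<open>f (a + y h)\<close> over the chord
  \<open>(1 - y) f a + y f (a + h)\<close>. Then \<open>\<delta>\<^sup>+ - \<delta>\<^sup>- = -E / (y (1 - y) h)\<close>, so \<open>f \<in> \<P>\<^sub>c\<close> says
  \<open>E \<ge> c y (1 - y) h\<close>. Since \<open>q\<^sub>f(t, x; \<cdot>)\<close> is \<open>f\<close> plus a parabola of curvature \<open>1/t\<close>, its own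
  chord excess is \<open>E - y (1 - y) h\<^sup>2 / (2 t)\<close>; for \<open>t \<ge> h / (2c)\<close> this is nonnegative, which
  gives the minimum property. Conversely, for \<open>t = h / (2c)\<close> one can choose \<open>x\<close> so that
  \<open>q\<^sub>f\<close> takes equal values at the two endpoints; then the minimum property says that the
  chord excess of \<open>q\<^sub>f\<close> is nonnegative.\<close>

definition chord_excess :: "(real \<Rightarrow> real) \<Rightarrow> real \<Rightarrow> real \<Rightarrow> real \<Rightarrow> real" where
  "chord_excess f a h y = f (a + y * h) - ((1 - y) * f a + y * f (a + h))"

lemma chord_excess_qf:
  assumes "t \<noteq> 0"
  shows "chord_excess (qf f t x) a h y = chord_excess f a h y - y * (1 - y) * h\<^sup>2 / (2 * t)"
  using assms by (simp add: chord_excess_def qf_def field_simps power2_eq_square)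

lemma slope_difference_eq_chord_excess:
  fixes f :: "real \<Rightarrow> real"
  assumes "h \<noteq> 0" "y \<noteq> 0" "y \<noteq> 1"
  shows "(f (a + h) - f (a + y * h)) / ((1 - y) * h) - (f (a + y * h) - f a) / (y * h)
    = - chord_excess f a h y / (y * (1 - y) * h)"
  using assms by (simp add: chord_excess_def field_simps)

lemma slope_difference_le_iff:
  fixes f :: "real \<Rightarrow> real"
  assumes "h > 0" "0 < y" "y < 1"
  shows "(f (a + h) - f (a + y * h)) / ((1 - y) * h) - (f (a + y * h) - f a) / (y * h) \<le> - c
    \<longleftrightarrow> c * y * (1 - y) * h \<le> chord_excess f a h y"
proof -
  have "y * (1 - y) * h > 0"
    using assms by simp
  moreover have "(f (a + h) - f (a + y * h)) / ((1 - y) * h) - (f (a + y * h) - f a) / (y * h)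
      = - (chord_excess f a h y / (y * (1 - y) * h))"
    using assms by (simp add: slope_difference_eq_chord_excess)
  ultimately show ?thesis
    by (simp add: pos_le_divide_eq mult_ac)
qed

lemma delta_difference_le_iff:
  assumes "r > 0" "0 < y" "y < 1"
  shows "delta_plus r n k y f - delta_minus r n k y f \<le> - c
    \<longleftrightarrow> c * y * (1 - y) * (1 / real r ^ n) \<le> chord_excess f (k / real r ^ n) (1 / real r ^ n) y"
proof -
  define a h where "a = k / real r ^ n" and "h = 1 / real r ^ n"
  have "delta_plus r n k y f = (f (a + h) - f (a + y * h)) / ((1 - y) * h)"
    by (simp add: delta_plus_def a_def h_def add_divide_distrib)
  moreover have "delta_minus r n k y f = (f (a + y * h) - f a) / (y * h)"
    by (simp add: delta_minus_def a_def h_def add_divide_distrib)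
  moreover have "h > 0"
    using assms(1) by (simp add: h_def)
  ultimately have "delta_plus r n k y f - delta_minus r n k y f \<le> - c
      \<longleftrightarrow> c * y * (1 - y) * h \<le> chord_excess f a h y"
    using slope_difference_le_iff[of h y f a c] assms(2,3) by simp
  then show ?thesis
    unfolding a_def h_def .
qed

lemma convex_combination_ge_min:
  fixes u v y :: real
  assumes "0 \<le> y" "y \<le> 1"
  shows "(1 - y) * u + y * v \<ge> min u v"
proof -
  have "(1 - y) * u + y * v \<ge> (1 - y) * min u v + y * min u v"
    using assms by (intro add_mono mult_left_mono) auto
  then show ?thesis
    by (simp add: algebra_simps)
qed

lemma qf_balanced_endpoints:
  assumes "t \<noteq> 0" "h \<noteq> 0"
  shows "qf f t (a + h / 2 + t * (f (a + h) - f a) / h) a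
    = qf f t (a + h / 2 + t * (f (a + h) - f a) / h) (a + h)"
  using assms by (simp add: qf_def field_simps power2_eq_square)

lemma qf_ge_min_iff_chord_excess:
  fixes f :: "real \<Rightarrow> real"
  assumes "h > 0" "c > 0" "0 \<le> y" "y \<le> 1"
  shows "(\<forall>t x. t \<ge> h / (2 * c) \<longrightarrow> qf f t x (a + y * h) \<ge> min (qf f t x a) (qf f t x (a + h)))
    \<longleftrightarrow> c * y * (1 - y) * h \<le> chord_excess f a h y"
proof
  assume min_prop: "\<forall>t x. t \<ge> h / (2 * c) \<longrightarrow> qf f t x (a + y * h) \<ge> min (qf f t x a) (qf f t x (a + h))"
  define t where "t = h / (2 * c)"
  define x where "x = a + h / 2 + t * (f (a + h) - f a) / h"
  have "t > 0"
    using assms by (simp add: t_def)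
  have balanced: "qf f t x a = qf f t x (a + h)"
    unfolding x_def using qf_balanced_endpoints \<open>t > 0\<close> assms(1) by simp
  have "chord_excess (qf f t x) a h y \<ge> 0"
    using min_prop[rule_format, of t x] balanced by (simp add: t_def chord_excess_def algebra_simps)
  moreover have "y * (1 - y) * h\<^sup>2 / (2 * t) = c * y * (1 - y) * h"
    using assms by (simp add: t_def power2_eq_square)
  ultimately show "c * y * (1 - y) * h \<le> chord_excess f a h y"
    using chord_excess_qf[of t f x a h y] \<open>t > 0\<close> by simp
next
  assume excess: "c * y * (1 - y) * h \<le> chord_excess f a h y"
  show "\<forall>t x. t \<ge> h / (2 * c) \<longrightarrow> qf f t x (a + y * h) \<ge> min (qf f t x a) (qf f t x (a + h))"
  proof (intro allI impI)
    fix t x :: real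
    assume "t \<ge> h / (2 * c)"
    moreover have "h / (2 * c) > 0"
      using assms by simp
    ultimately have "t > 0"
      by linarith
    with \<open>t \<ge> h / (2 * c)\<close> have "h / (2 * t) \<le> c"
      using assms by (simp add: field_simps)
    then have "y * (1 - y) * h\<^sup>2 / (2 * t) \<le> c * y * (1 - y) * h"
      using mult_left_mono[of "h / (2 * t)" c "y * (1 - y) * h"] assms
      by (simp add: power2_eq_square mult_ac)
    then have "chord_excess (qf f t x) a h y \<ge> 0"
      using chord_excess_qf[of t f x a h y] excess \<open>t > 0\<close> by simp
    then show "qf f t x (a + y * h) \<ge> min (qf f t x a) (qf f t x (a + h))"
      using convex_combination_ge_min[OF assms(3,4), of "qf f t x a" "qf f t x (a + h)"]
      by (simp add: chord_excess_def)
  qed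
qed

lemma delta_difference_le_iff_qf_ge_min:
  fixes k :: int and y c :: real
  assumes "r > 0" "c > 0" "0 < y" "y < 1"
  shows "delta_plus r n k y f - delta_minus r n k y f \<le> - c \<longleftrightarrow>
    (\<forall>t x. t \<ge> 1 / (2 * c * real r ^ n) \<longrightarrow>
       qf f t x ((k + y) / real r ^ n) \<ge>
         min (qf f t x (k / real r ^ n)) (qf f t x ((real_of_int k + 1) / real r ^ n)))"
proof -
  have points: "(real_of_int k + 1) / real r ^ n = k / real r ^ n + 1 / real r ^ n"
    "(k + y) / real r ^ n = k / real r ^ n + y * (1 / real r ^ n)"
    "1 / (2 * c * real r ^ n) = (1 / real r ^ n) / (2 * c)"
    by (simp_all add: add_divide_distrib)
  show ?thesis
    unfolding points delta_difference_le_iff[OF assms(1,3,4)]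
    using qf_ge_min_iff_chord_excess[of "1 / real r ^ n" c y f "k / real r ^ n"] assms
    by simp
qed

theorem theorem2p3:
  fixes r :: nat and f :: "real \<Rightarrow> real" and c :: real
  assumes "r \<ge> 2" and "f \<in> Cp" and "c > 0"
  shows "f \<in> Pc r c \<longleftrightarrow>
    (\<forall>(n::nat) (k::int) (y::real) (t::real) (x::real).
       0 < y \<and> y < 1 \<and> t \<ge> 1 / (2 * c * real r ^ n) \<longrightarrow>
       qf f t x ((k + y) / real r ^ n) \<ge>
         min (qf f t x (k / real r ^ n)) (qf f t x ((k + 1) / real r ^ n)))"
proof -
  have "r > 0"
    using assms(1) by simp
  have "f \<in> Pc r c \<longleftrightarrow>
      (\<forall>n k y. 0 < y \<and> y < 1 \<longrightarrow> delta_plus r n k y f - delta_minus r n k y f \<le> - c)"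
    using assms(2) by (simp add: Pc_def)
  also have "\<dots> \<longleftrightarrow> (\<forall>(n::nat) (k::int) (y::real). 0 < y \<and> y < 1 \<longrightarrow>
      (\<forall>t x. t \<ge> 1 / (2 * c * real r ^ n) \<longrightarrow>
         qf f t x ((k + y) / real r ^ n) \<ge>
           min (qf f t x (k / real r ^ n)) (qf f t x ((k + 1) / real r ^ n))))"
    using delta_difference_le_iff_qf_ge_min[OF \<open>r > 0\<close> assms(3)] by simp
  finally show ?thesis
    by blast
qed

end
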